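(* Let $\lambda_h>0$. For every $x>0$, every $\Psi\in\mathcal L$ and every nondecreasing function $g:[0,\infty)\to[0,\infty)$, $$A_{\lambda_h}(g;x,\Psi)\le_{\mathrm{st}}A_{\lambda_h}(g;x,\Psi_\infty).$$
   Context: $\mathcal L$ is the set of all bivariate cdfs with support in $(0,\infty)\times(0,\infty]$. For $\Psi\in\mathcal L$, $G(s)=\Psi(s,\infty)$. $\Psi_\infty$ denotes the cdf of a random vector $(S,Y)$ with $S\sim G$ and $Y=\infty$ almost surely, so that all customers join. The $M/G(\Psi)/1+H(\Psi)$ queue with rate $\lambda_h$ and initial workload $x$ is defined as follows. - It is a single-server FCFS queue with infinite waiting room. - There is one initial customer with remaining service $x$. - Arrivals form a Poisson process of rate $\lambda_h$. - $(S_i,Y_i)$ are iid with cdf $\Psi$ and independent of the arrivals. - The $i$-th arrival at time $T_i$ joins if and only if $Y_i\ge W(T_i-)$, where $W$ is the workload (decreasing at unit rate while positive), and if he joins he adds $S_i$. $W_{\lambda_h}(\cdot;x,\Psi)$ denotes the workload and $\tau_{\lambda_h}(x;\Psi)$ its first hitting time of $0$. Define $$A_{\lambda_h}(g;x,\Psi)=\int_0^{\tau_{\lambda_h}(x;\Psi)}g(W_{\lambda_h}(t;x,\Psi))\,dt.$$ $X\le_{\mathrm{st}}Y$ means $P(X>s)\le P(Y>s)$ for all $s$. *)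

theory Defs
  imports "HOL-Probability.Probability"
begin

text \<open>Sample point: omega n = (E_n, (S_n, Y_n)) where E_n is the interarrival time
  preceding arrival n+1 and (S_n, Y_n) are the marks (service, patience) of arrival n+1.\<close>

type_synonym sample = "nat \<Rightarrow> real \<times> real \<times> ereal"

definition in_L :: "(real \<times> ereal) measure \<Rightarrow> bool" where
  "in_L Psi \<longleftrightarrow> prob_space Psi \<and> sets Psi = sets borel \<and>
     (AE p in Psi. 0 < fst p \<and> 0 < snd p)"

definition Psi_inf :: "(real \<times> ereal) measure \<Rightarrow> (real \<times> ereal) measure" where
  "Psi_inf Psi = distr Psi borel (\<lambda>p. (fst p, \<infinity>))"

definition queue_space :: "real \<Rightarrow> (real \<times> ereal) measure \<Rightarrow> sample measure" where
  "queue_space lam Psi =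
     (\<Pi>\<^sub>M n\<in>(UNIV::nat set). density lborel (exponential_density lam) \<Otimes>\<^sub>M Psi)"

text \<open>Time of the n-th arrival (arr_time w 0 = 0 is the time of the initial customer).\<close>
definition arr_time :: "sample \<Rightarrow> nat \<Rightarrow> real" where
  "arr_time w n = (\<Sum>i<n. fst (w i))"

text \<open>Workload just after the n-th arrival epoch (after the decision of arrival n).\<close>
fun wplus :: "real \<Rightarrow> sample \<Rightarrow> nat \<Rightarrow> real" where
  "wplus x w 0 = x"
| "wplus x w (Suc n) =
     (let v = max 0 (wplus x w n - fst (w n)); s = fst (snd (w n)); y = snd (snd (w n))
      in if ereal v \<le> y then v + s else v)"

definition workload :: "real \<Rightarrow> sample \<Rightarrow> real \<Rightarrow> real" where
  "workload x w t =
     (let n = (LEAST n. t < arr_time w (Suc n)) in max 0 (wplus x w n - (t - arr_time w n)))"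

text \<open>First hitting time of 0 (infinity if never hit).\<close>
definition hit_time :: "real \<Rightarrow> sample \<Rightarrow> ereal" where
  "hit_time x w = Inf (ereal ` {t. 0 \<le> t \<and> workload x w t = 0})"

definition A_fun :: "(real \<Rightarrow> real) \<Rightarrow> real \<Rightarrow> sample \<Rightarrow> ennreal" where
  "A_fun g x w =
     (\<integral>\<^sup>+ t. indicator {t. 0 \<le> t \<and> ereal t < hit_time x w} t * ennreal (g (workload x w t)) \<partial>lborel)"

end

theory Submission
  imports Defs
begin

text \<open>Couple the two queues on one sample space: keep every interarrival and service time but
  replace each patience by \<open>\<infinity>\<close>, so that every customer joins. The resulting sample has law
  \<open>queue_space lam (Psi_inf Psi)\<close>. Since service times are nonnegative, joining can only raise
  the workload just after an arrival, and this propagates by induction to the whole workload path.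
  A larger workload delays the first hitting time of \<open>0\<close> and, \<open>g\<close> being nondecreasing, enlarges
  the integrand, so \<open>A\<close> increases pathwise; pathwise domination under a coupling yields the
  stochastic order.\<close>

lemma measurable_PiM_componentwise:
  assumes h: "h \<in> measurable M N"
  shows "(\<lambda>w i. h (w i)) \<in> measurable (\<Pi>\<^sub>M i\<in>(UNIV::'i set). M) (\<Pi>\<^sub>M i\<in>UNIV. N)"
proof (rule measurable_PiM_single')
  show "(\<lambda>w. h (w i)) \<in> measurable (\<Pi>\<^sub>M i\<in>UNIV. M) N" for i :: 'i
    using h by measurable
  show "(\<lambda>w i. h (w i)) \<in> space (\<Pi>\<^sub>M i\<in>UNIV. M) \<rightarrow> (\<Pi>\<^sub>E i\<in>UNIV. space N)"
    using h by (auto simp: space_PiM intro!: measurable_space[OF h])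
qed

lemma distr_PiM_componentwise:
  assumes "prob_space M" and h: "h \<in> measurable M N"
  shows "distr (\<Pi>\<^sub>M i\<in>(UNIV::'i set). M) (\<Pi>\<^sub>M i\<in>UNIV. N) (\<lambda>w i. h (w i))
    = (\<Pi>\<^sub>M i\<in>UNIV. distr M N h)"
    (is "distr ?M ?N ?h = ?D")
proof (rule measure_eqI_PiM_infinite[symmetric, OF refl])
  have ps: "prob_space (distr M N h)"
    using assms by (simp add: prob_space.prob_space_distr)
  interpret prob_space ?D
    using ps by (intro prob_space_PiM) auto
  show "finite_measure ?D" by unfold_locales
  show "sets (distr ?M ?N ?h) = sets ?D"
    by (simp cong: sets_PiM_cong)
  fix J :: "'i set" and A assume J: "finite J" and A: "\<And>i. i \<in> J \<Longrightarrow> A i \<in> sets (distr M N h)"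
  have "emeasure ?D (prod_emb UNIV (\<lambda>_. distr M N h) J (Pi\<^sub>E J A)) = (\<Prod>i\<in>J. distr M N h (A i))"
    using J A ps by (intro emeasure_PiM_emb) auto
  also have "\<dots> = (\<Prod>i\<in>J. M (h -` A i \<inter> space M))"
    using A h by (intro prod.cong refl emeasure_distr) auto
  also have "\<dots> = emeasure ?M (prod_emb UNIV (\<lambda>_. M) J (\<Pi>\<^sub>E i\<in>J. h -` A i \<inter> space M))"
    using J A h assms(1) by (intro emeasure_PiM_emb[symmetric]) (auto intro!: measurable_sets)
  also have "prod_emb UNIV (\<lambda>_. M) J (\<Pi>\<^sub>E i\<in>J. h -` A i \<inter> space M)
      = ?h -` prod_emb UNIV (\<lambda>_. distr M N h) J (Pi\<^sub>E J A) \<inter> space ?M"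
    using h by (auto simp: prod_emb_def space_PiM PiE_iff measurable_space)
  also have "emeasure ?M \<dots> = emeasure (distr ?M ?N ?h) (prod_emb UNIV (\<lambda>_. distr M N h) J (Pi\<^sub>E J A))"
  proof (intro emeasure_distr[symmetric] measurable_PiM_componentwise[OF h])
    have "prod_emb UNIV (\<lambda>_. distr M N h) J (Pi\<^sub>E J A) \<in> sets ?D"
      using J A by (intro sets_PiM_I) auto
    then show "prod_emb UNIV (\<lambda>_. distr M N h) J (Pi\<^sub>E J A) \<in> sets ?N"
      by (simp cong: sets_PiM_cong)
  qed
  finally show "emeasure ?D (prod_emb UNIV (\<lambda>_. distr M N h) J (Pi\<^sub>E J A))
      = emeasure (distr ?M ?N ?h) (prod_emb UNIV (\<lambda>_. distr M N h) J (Pi\<^sub>E J A))" .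
qed

lemma measure_less_le_measure_distr_less:
  fixes f :: "'a \<Rightarrow> 'b::linorder"
  assumes "finite_measure M" and F: "F \<in> measurable M M"
    and dom: "AE w in M. f w \<le> f (F w)"
  shows "measure M {w \<in> space M. s < f w} \<le> measure (distr M M F) {w \<in> space M. s < f w}"
    (is "measure M ?D \<le> _")
proof (cases "?D \<in> sets M")
  case True
  interpret finite_measure M by fact
  have "measure M ?D \<le> measure M (F -` ?D \<inter> space M)"
  proof (rule finite_measure_mono_AE)
    show "F -` ?D \<inter> space M \<in> sets M"
      using F True by (rule measurable_sets)
    show "AE w in M. w \<in> ?D \<longrightarrow> w \<in> F -` ?D \<inter> space M"
      using dom by eventually_elim (auto intro: measurable_space[OF F] less_le_trans)
  qed
  also have "\<dots> = measure (distr M M F) ?D"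
    using F True by (rule measure_distr[symmetric])
  finally show ?thesis .
qed (simp add: measure_notin_sets)

definition all_join :: "sample \<Rightarrow> sample" where
  "all_join w = (\<lambda>n. (fst (w n), fst (snd (w n)), \<infinity>))"

lemma all_join_simps [simp]:
  "fst (all_join w n) = fst (w n)"
  "fst (snd (all_join w n)) = fst (snd (w n))"
  "snd (snd (all_join w n)) = \<infinity>"
  by (simp_all add: all_join_def)

lemma arr_time_all_join [simp]: "arr_time (all_join w) = arr_time w"
  by (simp add: arr_time_def fun_eq_iff)

lemma wplus_le_wplus_all_join:
  assumes "\<forall>n. 0 \<le> fst (snd (w n))"
  shows "wplus x w n \<le> wplus x (all_join w) n"
proof (induction n)
  case (Suc n)
  have "max 0 (wplus x w n - fst (w n)) \<le> max 0 (wplus x (all_join w) n - fst (w n))"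
    using Suc by auto
  moreover have "0 \<le> fst (snd (w n))"
    using assms by simp
  ultimately show ?case
    by (auto simp: Let_def)
qed simp

lemma workload_nonneg: "0 \<le> workload x w t"
  by (simp add: workload_def Let_def)

lemma workload_le_workload_all_join:
  assumes "\<forall>n. 0 \<le> fst (snd (w n))"
  shows "workload x w t \<le> workload x (all_join w) t"
  using wplus_le_wplus_all_join[OF assms]
  unfolding workload_def Let_def arr_time_all_join by (meson diff_right_mono max.mono order_refl)

lemma hit_time_le_hit_time_all_join:
  assumes "\<forall>n. 0 \<le> fst (snd (w n))"
  shows "hit_time x w \<le> hit_time x (all_join w)"
  unfolding hit_time_def
proof (intro Inf_superset_mono image_mono subsetI CollectI conjI)
  fix t assume t: "t \<in> {t. 0 \<le> t \<and> workload x (all_join w) t = 0}"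
  then show "0 \<le> t" by simp
  show "workload x w t = 0"
    using t workload_le_workload_all_join[OF assms, of x t] workload_nonneg[of x w t] by simp
qed

lemma A_fun_le_A_fun_all_join:
  assumes "\<forall>n. 0 \<le> fst (snd (w n))" and g: "mono_on {0..} g"
  shows "A_fun g x w \<le> A_fun g x (all_join w)"
  unfolding A_fun_def
proof (intro nn_integral_mono mult_mono ennreal_leI)
  fix t
  show "indicator {t. 0 \<le> t \<and> ereal t < hit_time x w} t
      \<le> (indicator {t. 0 \<le> t \<and> ereal t < hit_time x (all_join w)} t :: ennreal)"
    using hit_time_le_hit_time_all_join[OF assms(1), of x]
    by (auto simp: indicator_def intro: less_le_trans)
  show "g (workload x w t) \<le> g (workload x (all_join w) t)"
    using workload_le_workload_all_join[OF assms(1), of x t] workload_nonneg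
    by (intro mono_onD[OF g]) auto
qed auto

lemma prob_space_queue_space:
  assumes "lam > 0" and "prob_space Psi"
  shows "prob_space (queue_space lam Psi)"
  unfolding queue_space_def
  using prob_space_exponential_density[OF assms(1)] assms(2)
  by (intro prob_space_PiM prob_space_pair)

lemma measurable_all_join:
  assumes "sets Psi = sets borel"
  shows "all_join \<in> measurable (queue_space lam Psi) (queue_space lam Psi)"
proof -
  define E where "E = density lborel (exponential_density lam)"
  have "(\<lambda>p. (fst p, fst (snd p), \<infinity>)) \<in> measurable
      (E \<Otimes>\<^sub>M ((borel :: real measure) \<Otimes>\<^sub>M (borel :: ereal measure)))
      (E \<Otimes>\<^sub>M ((borel :: real measure) \<Otimes>\<^sub>M (borel :: ereal measure)))"
    by measurable
  then have "(\<lambda>p. (fst p, fst (snd p), \<infinity>)) \<in> measurable (E \<Otimes>\<^sub>M Psi) (E \<Otimes>\<^sub>M Psi)"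
    unfolding measurable_cong_sets[OF sets_pair_measure_cong[OF refl assms] sets_pair_measure_cong[OF refl assms]]
      borel_prod .
  then show ?thesis
    unfolding queue_space_def all_join_def E_def[symmetric] by (rule measurable_PiM_componentwise)
qed

lemma queue_space_Psi_inf:
  assumes "lam > 0" and "in_L Psi"
  shows "queue_space lam (Psi_inf Psi) = distr (queue_space lam Psi) (queue_space lam Psi) all_join"
proof -
  define E where "E = density lborel (exponential_density lam)"
  define join :: "real \<times> ereal \<Rightarrow> real \<times> ereal" where "join p = (fst p, \<infinity>)" for p
  have E: "prob_space E"
    unfolding E_def using assms(1) by (rule prob_space_exponential_density)
  have Psi: "prob_space Psi" "sets Psi = sets borel"
    using assms(2) by (auto simp: in_L_def)
  have "join \<in> measurable (borel \<Otimes>\<^sub>M borel) (borel \<Otimes>\<^sub>M borel)"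
    unfolding join_def by measurable
  then have join[measurable]: "join \<in> measurable Psi borel"
    unfolding measurable_cong_sets[OF Psi(2) refl] borel_prod .
  have "distr E E (\<lambda>x. x) \<Otimes>\<^sub>M distr Psi borel join
      = distr (E \<Otimes>\<^sub>M Psi) (E \<Otimes>\<^sub>M borel) (\<lambda>(x, y). (x, join y))"
    using E prob_space.prob_space_distr[OF Psi(1) join]
    by (intro pair_measure_distr prob_space_imp_sigma_finite) auto
  then have mark: "E \<Otimes>\<^sub>M Psi_inf Psi = distr (E \<Otimes>\<^sub>M Psi) (E \<Otimes>\<^sub>M borel) (\<lambda>p. (fst p, join (snd p)))"
    by (simp add: Psi_inf_def join_def[abs_def] case_prod_beta')
  have sets_eq: "sets (\<Pi>\<^sub>M n\<in>UNIV. E \<Otimes>\<^sub>M borel) = sets (queue_space lam Psi)"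
    unfolding queue_space_def E_def using Psi(2)
    by (intro sets_PiM_cong refl sets_pair_measure_cong) simp_all
  have "queue_space lam (Psi_inf Psi)
      = distr (queue_space lam Psi) (\<Pi>\<^sub>M n\<in>UNIV. E \<Otimes>\<^sub>M borel) (\<lambda>w n. (fst (w n), join (snd (w n))))"
    unfolding queue_space_def E_def[symmetric] mark
    using E Psi(1) join by (intro distr_PiM_componentwise[symmetric] prob_space_pair) measurable
  also have "\<dots> = distr (queue_space lam Psi) (queue_space lam Psi) all_join"
    using sets_eq by (intro distr_cong) (simp_all add: all_join_def join_def)
  finally show ?thesis .
qed

lemma AE_queue_space_service_nonneg:
  assumes "lam > 0" and "in_L Psi"
  shows "AE w in queue_space lam Psi. \<forall>n. 0 \<le> fst (snd (w n))"
proof -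
  define E where "E = density lborel (exponential_density lam)"
  have E: "prob_space E"
    unfolding E_def using assms(1) by (rule prob_space_exponential_density)
  have Psi: "prob_space Psi" "sets Psi = sets borel" "AE p in Psi. 0 < fst p"
    using assms(2) by (auto simp: in_L_def elim: AE_mp)
  interpret pair_sigma_finite E Psi
    using E Psi(1) by (intro pair_sigma_finite.intro prob_space_imp_sigma_finite)
  have "AE p in E \<Otimes>\<^sub>M Psi. 0 \<le> fst (snd p)"
  proof (rule AE_pair_measure)
    have "(\<lambda>p. fst (snd p)) \<in> borel_measurable (E \<Otimes>\<^sub>M ((borel :: real measure) \<Otimes>\<^sub>M (borel :: ereal measure)))"
      by measurable
    then have "(\<lambda>p. fst (snd p)) \<in> borel_measurable (E \<Otimes>\<^sub>M Psi)"
      unfolding measurable_cong_sets[OF sets_pair_measure_cong[OF refl Psi(2)] refl] borel_prod .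
    then show "{p \<in> space (E \<Otimes>\<^sub>M Psi). 0 \<le> fst (snd p)} \<in> sets (E \<Otimes>\<^sub>M Psi)"
      by measurable
    show "AE x in E. AE y in Psi. 0 \<le> fst (snd (x, y))"
      using Psi(3) by (auto elim: AE_mp)
  qed
  then show ?thesis
    unfolding queue_space_def AE_all_countable E_def[symmetric]
    using E Psi(1) by (auto intro: AE_PiM_component prob_space_pair)
qed

theorem lemma2:
  fixes lam x :: real and Psi :: "(real \<times> ereal) measure" and g :: "real \<Rightarrow> real"
  assumes "lam > 0" and "x > 0" and "in_L Psi"
    and "mono_on {0..} g" and "\<forall>u\<ge>0. g u \<ge> 0"
  shows "\<forall>s::ennreal.
     measure (queue_space lam Psi) {w \<in> space (queue_space lam Psi). s < A_fun g x w}
     \<le> measure (queue_space lam (Psi_inf Psi)) {w \<in> space (queue_space lam (Psi_inf Psi)). s < A_fun g x w}"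
proof
  fix s :: ennreal
  have Psi: "prob_space Psi" "sets Psi = sets borel"
    using assms(3) by (simp_all add: in_L_def)
  have "AE w in queue_space lam Psi. A_fun g x w \<le> A_fun g x (all_join w)"
    using AE_queue_space_service_nonneg[OF assms(1,3)]
    by eventually_elim (rule A_fun_le_A_fun_all_join[OF _ assms(4)])
  then show "measure (queue_space lam Psi) {w \<in> space (queue_space lam Psi). s < A_fun g x w}
     \<le> measure (queue_space lam (Psi_inf Psi)) {w \<in> space (queue_space lam (Psi_inf Psi)). s < A_fun g x w}"
    unfolding queue_space_Psi_inf[OF assms(1,3)] space_distr
    using prob_space_queue_space[OF assms(1) Psi(1)] measurable_all_join[OF Psi(2)]
    by (intro measure_less_le_measure_distr_less prob_space.finite_measure)
qed

end
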